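(* For every $N\ge 1$ and every integer $n\ge 1$, $$\Pr[\mathcal{N}_1(N)=n]=\frac{1}{(N-1)!}\left\langle {N-1\atop n-1}\right\rangle ,$$ where $\left\langle {m\atop j}\right\rangle$ is the Eulerian number, i.e. the number of permutations of $\{1,\dots,m\}$ with exactly $j$ descents (with $\left\langle {0\atop 0}\right\rangle=1$ and $\left\langle {m\atop j}\right\rangle=0$ for $j<0$ or $j\ge \max(m,1)$).
   Context: A random recursive hypergraph (RRH) is the random hypergraph process defined as follows. At size $N=1$ it has vertex set $\{v_1\}$ and edge set $\{\{v_1\}\}$. Given the hypergraph of size $N$ (vertices $v_1,\dots,v_N$, exactly $N$ edges), one chooses an existing edge $e$ uniformly at random, independently of the past, and adds a new vertex $v_{N+1}$ together with the new edge $e\cup\{v_{N+1}\}$; this gives the hypergraph of size $N+1$. The degree $d(v)$ of a vertex $v$ is the number of edges containing $v$. $\mathcal{N}_k(N)$ denotes the number of vertices of degree $k$ in the RRH of size $N$. *)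

theory Defs
  imports "HOL-Probability.Probability_Mass_Function" "HOL-Combinatorics.Permutations"
begin

text \<open>A hypergraph of size N is represented by the list of its N edges
  (edge i is the (i+1)-th edge created); vertices are 1..N, vertex v_k is k.\<close>

fun rrh :: "nat \<Rightarrow> nat set list pmf" where
  "rrh 0 = return_pmf []"
| "rrh (Suc 0) = return_pmf [{1}]"
| "rrh (Suc (Suc m)) =
     bind_pmf (rrh (Suc m)) (\<lambda>H.
       map_pmf (\<lambda>i. H @ [insert (Suc (Suc m)) (H ! i)]) (pmf_of_set {0..<length H}))"

definition hdeg :: "nat set list \<Rightarrow> nat \<Rightarrow> nat" where
  "hdeg H v = card {i. i < length H \<and> v \<in> H ! i}"

definition numdeg :: "nat \<Rightarrow> nat \<Rightarrow> nat set list \<Rightarrow> nat" where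
  "numdeg N k H = card {v \<in> {1..N}. hdeg H v = k}"

definition eulerian :: "nat \<Rightarrow> nat \<Rightarrow> nat" where
  "eulerian m j = card {p. p permutes {1..m} \<and>
      card {i \<in> {1..<m}. p (Suc i) < p i} = j}"

end

theory Submission
  imports Defs "HOL-Combinatorics.Multiset_Permutations"
begin

text \<open>Attaching the new vertex \<open>N + 1\<close> to the edge created with vertex \<open>i\<close> makes the new
  vertex a leaf, turns \<open>i\<close> into a non-leaf if it was a leaf, and does not affect the leaf status
  of the older vertices of that edge, whose degree is already at least two. So the number of leaves
  stays put with probability (number of leaves)/\<open>N\<close> and grows by one otherwise. Inserting
  \<open>N + 1\<close> into a permutation of \<open>{1..N}\<close> keeps its \<open>d\<close> descents if it goes into one of the
  \<open>d\<close> descent gaps or at the end, and adds one descent otherwise, so the descent count of a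
  uniform random permutation, plus one, obeys the same recurrence.\<close>

lemma card_filter_bij:
  assumes "bij_betw f A B"
  shows "card {y \<in> B. P y} = card {x \<in> A. P (f x)}"
proof -
  have "bij_betw f {x \<in> A. P (f x)} {y \<in> B. P y}"
    using assms by (auto simp: bij_betw_def intro: inj_on_subset)
  then show ?thesis by (simp add: bij_betw_same_card)
qed

lemma card_filter_if_Suc:
  assumes "finite A" and "\<And>x. x \<in> A \<Longrightarrow> f x = (if Q x then c else Suc c)"
  shows "card {x \<in> A. f x = n}
       = (if n = c then card {x \<in> A. Q x} else 0)
         + (if n = Suc c then card A - card {x \<in> A. Q x} else 0)"
proof -
  have "card {x \<in> A. \<not> Q x} = card A - card {x \<in> A. Q x}"
    using assms(1) by (subst card_Diff_subset[symmetric]) (auto intro: arg_cong[where f = card])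
  moreover have "{x \<in> A. f x = n} = {x \<in> A. (if Q x then c else Suc c) = n}"
    using assms(2) by auto
  moreover have "\<dots> =
      (if n = c then {x \<in> A. Q x} else if n = Suc c then {x \<in> A. \<not> Q x} else {})"
    by auto
  ultimately show ?thesis by auto
qed

section \<open>Descents\<close>

definition descents :: "'a::linorder list \<Rightarrow> nat" where
  "descents xs = card {i. Suc i < length xs \<and> xs ! Suc i < xs ! i}"

lemma descents_Nil [simp]: "descents [] = 0"
  by (simp add: descents_def)

lemma descents_singleton [simp]: "descents [x] = 0"
  by (simp add: descents_def)

lemma descents_Cons_Cons:
  "descents (x # y # zs) = (if y < x then Suc (descents (y # zs)) else descents (y # zs))"
proof -
  let ?D = "\<lambda>xs. {i. Suc i < length xs \<and> xs ! Suc i < xs ! i}"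
  have "?D (x # y # zs) = (if y < x then {0} else {}) \<union> Suc ` ?D (y # zs)"
  proof (intro set_eqI iffI)
    show "i \<in> ?D (x # y # zs) \<Longrightarrow> i \<in> (if y < x then {0} else {}) \<union> Suc ` ?D (y # zs)" for i
      by (cases i) auto
  qed (auto split: if_splits)
  moreover have "finite (?D (y # zs))"
    by (rule finite_subset[of _ "{..<length (y # zs)}"]) auto
  ultimately show ?thesis
    by (simp add: descents_def card_image)
qed

definition insert_at :: "nat \<Rightarrow> 'a \<Rightarrow> 'a list \<Rightarrow> 'a list" where
  "insert_at j a xs = take j xs @ a # drop j xs"

lemma insert_at_0 [simp]: "insert_at 0 a xs = a # xs"
  by (simp add: insert_at_def)

lemma insert_at_Suc_Cons [simp]: "insert_at (Suc j) a (x # xs) = x # insert_at j a xs"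
  by (simp add: insert_at_def)

lemma insert_at_Nil [simp]: "insert_at j a [] = [a]"
  by (simp add: insert_at_def)

lemma mset_insert_at: "mset (insert_at j a xs) = add_mset a (mset xs)"
  unfolding insert_at_def
  by (subst (2) append_take_drop_id[symmetric, of _ j]) (simp del: append_take_drop_id)

lemma set_insert_at [simp]: "set (insert_at j a xs) = insert a (set xs)"
  by (metis mset_insert_at set_mset_mset set_mset_add_mset_insert)

lemma distinct_insert_at [simp]: "distinct (insert_at j a xs) \<longleftrightarrow> a \<notin> set xs \<and> distinct xs"
  by (metis mset_insert_at mset.simps(2) mset_eq_imp_distinct_iff distinct.simps(2))

text \<open>Gap \<open>j\<close> of \<open>xs\<close> lies between \<open>xs ! (j - 1)\<close> and \<open>xs ! j\<close>; gap \<open>0\<close> is the front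
  and gap \<open>length xs\<close> the end.\<close>

definition descent_gap :: "'a::linorder list \<Rightarrow> nat \<Rightarrow> bool" where
  "descent_gap xs j \<longleftrightarrow> j = length xs \<or> (0 < j \<and> xs ! j < xs ! (j - 1))"

lemma descents_insert_at_max:
  assumes "\<forall>x \<in> set xs. x < a" and "j \<le> length xs"
  shows "descents (insert_at j a xs)
       = (if descent_gap xs j then descents xs else Suc (descents xs))"
  using assms
proof (induction xs arbitrary: j)
  case Nil
  then show ?case by (simp add: descent_gap_def)
next
  case (Cons x xs)
  show ?case
  proof (cases j)
    case 0
    then show ?thesis using Cons.prems by (simp add: descents_Cons_Cons descent_gap_def)
  next
    case (Suc j')
    with Cons have IH: "descents (insert_at j' a xs)
        = (if descent_gap xs j' then descents xs else Suc (descents xs))"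
      by simp
    show ?thesis
    proof (cases xs)
      case Nil
      then show ?thesis using Cons.prems Suc by (simp add: descents_Cons_Cons descent_gap_def)
    next
      case (Cons y ys)
      then show ?thesis using IH Cons.prems \<open>j = Suc j'\<close>
        by (cases j') (auto simp: descents_Cons_Cons descent_gap_def)
    qed
  qed
qed

lemma card_descent_gaps: "card {j \<in> {0..length xs}. descent_gap xs j} = Suc (descents xs)"
proof -
  let ?D = "{i. Suc i < length xs \<and> xs ! Suc i < xs ! i}"
  have "{j \<in> {0..length xs}. descent_gap xs j} = insert (length xs) (Suc ` ?D)"
    by (auto simp: descent_gap_def image_iff gr0_conv_Suc)
  moreover have "finite ?D"
    by (rule finite_subset[of _ "{..<length xs}"]) auto
  moreover have "length xs \<notin> Suc ` ?D"
    by auto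
  ultimately show ?thesis
    by (simp add: descents_def card_image)
qed

section \<open>The Eulerian recurrence\<close>

lemma descents_map_upt:
  "descents (map p [1..<Suc m]) = card {i \<in> {1..<m}. p (Suc i) < p i}"
proof -
  let ?D = "{i. Suc i < length (map p [1..<Suc m]) \<and> map p [1..<Suc m] ! Suc i < map p [1..<Suc m] ! i}"
  have "{i \<in> {1..<m}. p (Suc i) < p i} = Suc ` ?D"
  proof (intro set_eqI iffI)
    show "i \<in> {i \<in> {1..<m}. p (Suc i) < p i} \<Longrightarrow> i \<in> Suc ` ?D" for i
      by (cases i) (auto simp del: upt_Suc)
  qed (auto simp del: upt_Suc)
  moreover have "finite ?D"
    by (rule finite_subset[of _ "{..<m}"]) (auto simp del: upt_Suc)
  ultimately show ?thesis
    by (simp add: descents_def card_image del: upt_Suc)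
qed

lemma bij_betw_permutes_permutations_of_set:
  "bij_betw (\<lambda>p. map p [1..<Suc m]) {p. p permutes {1..m}} (permutations_of_set {1..m})"
proof -
  have upt: "[1..<Suc m] \<in> permutations_of_set {1..m}"
    by (auto simp del: upt_Suc)
  have "inj_on (\<lambda>p. map p [1..<Suc m]) {p. p permutes {1..m}}"
  proof (rule inj_onI, rule ext)
    fix p q x
    assume "p \<in> {p. p permutes {1..m}}" "q \<in> {p. p permutes {1..m}}"
      and "map p [1..<Suc m] = map q [1..<Suc m]"
    then show "p x = q x"
      by (cases "x \<in> {1..m}") (auto simp: permutes_not_in map_eq_conv simp del: upt_Suc)
  qed
  moreover have "(\<lambda>p. map p [1..<Suc m]) ` {p. p permutes {1..m}} \<subseteq> permutations_of_set {1..m}"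
    using upt permutations_of_set_image_permutes by blast
  moreover have "card {p. p permutes {1..m}} = card (permutations_of_set {1..m})"
    by (simp add: card_permutations)
  ultimately show ?thesis
    by (simp add: bij_betw_def card_subset_eq card_image)
qed

lemma eulerian_eq_card_descents:
  "eulerian m k = card {xs \<in> permutations_of_set {1..m}. descents xs = k}"
proof -
  have "card {xs \<in> permutations_of_set {1..m}. descents xs = k}
      = card {p \<in> {p. p permutes {1..m}}. descents (map p [1..<Suc m]) = k}"
    by (rule card_filter_bij[OF bij_betw_permutes_permutations_of_set])
  then show ?thesis
    unfolding eulerian_def descents_map_upt by simp
qed

lemma eulerian_0: "eulerian 0 k = (if k = 0 then 1 else 0)"
  by (simp add: eulerian_eq_card_descents cong: conj_cong)

lemma bij_betw_insert_at_max:
  "bij_betw (\<lambda>(xs, j). insert_at j (Suc m) xs)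
     (permutations_of_set {1..m} \<times> {0..m}) (permutations_of_set {1..Suc m})"
proof (rule bij_betw_imageI)
  show "inj_on (\<lambda>(xs, j). insert_at j (Suc m) xs) (permutations_of_set {1..m} \<times> {0..m})"
  proof (rule inj_onI, clarify)
    fix xs j xs' j'
    assume a: "xs \<in> permutations_of_set {1..m}" "j \<in> {0..m}"
      "xs' \<in> permutations_of_set {1..m}" "j' \<in> {0..m}"
      and e: "insert_at j (Suc m) xs = insert_at j' (Suc m) xs'"
    have "Suc m \<notin> set xs"
      using permutations_of_setD[OF a(1)] by auto
    then have "Suc m \<notin> set (take j xs)" "Suc m \<notin> set (drop j xs)"
      by (meson in_set_takeD in_set_dropD)+
    with e have "take j xs = take j' xs' \<and> drop j xs = drop j' xs'"
      unfolding insert_at_def by (metis append_Cons_eq_iff)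
    moreover have "length xs = m" "length xs' = m"
      using a by (auto dest: length_finite_permutations_of_set)
    ultimately show "xs = xs' \<and> j = j'"
      using a by (metis append_take_drop_id atLeastAtMost_iff length_take min.absorb2)
  qed
next
  have "insert_at j (Suc m) xs \<in> permutations_of_set {1..Suc m}"
    if "xs \<in> permutations_of_set {1..m}" for xs j
    using permutations_of_setD[OF that] by (auto simp: atLeastAtMostSuc_conv)
  moreover have "ys \<in> (\<lambda>(xs, j). insert_at j (Suc m) xs) ` (permutations_of_set {1..m} \<times> {0..m})"
    if ys: "ys \<in> permutations_of_set {1..Suc m}" for ys
  proof -
    have "Suc m \<in> set ys"
      using permutations_of_setD[OF ys] by simp
    then obtain as bs where ab: "ys = as @ Suc m # bs"
      by (meson split_list)
    have "set (as @ bs) = set ys - {Suc m}" "distinct (as @ bs)"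
      using permutations_of_setD(2)[OF ys] unfolding ab by auto
    then have "as @ bs \<in> permutations_of_set {1..m}"
      using permutations_of_setD(1)[OF ys] by (auto simp: atLeastAtMostSuc_conv)
    moreover have "length as \<le> m"
      using length_finite_permutations_of_set[OF ys] ab by simp
    moreover have "ys = insert_at (length as) (Suc m) (as @ bs)"
      by (simp add: ab insert_at_def)
    ultimately show ?thesis
      by force
  qed
  ultimately show "(\<lambda>(xs, j). insert_at j (Suc m) xs) ` (permutations_of_set {1..m} \<times> {0..m})
      = permutations_of_set {1..Suc m}"
    by auto
qed

lemma eulerian_Suc:
  "eulerian (Suc m) k
   = Suc k * eulerian m k + (if k = 0 then 0 else (Suc m - k) * eulerian m (k - 1))"
proof -
  let ?S = "\<lambda>m. permutations_of_set {1..m::nat}"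
  have gaps: "card {j \<in> {0..m}. descents (insert_at j (Suc m) xs) = k}
      = (if descents xs = k then Suc k else 0) + (if Suc (descents xs) = k then Suc m - k else 0)"
    if xs: "xs \<in> ?S m" for xs
  proof -
    have len: "length xs = m"
      using length_finite_permutations_of_set[OF xs] by simp
    have "\<forall>x \<in> set xs. x < Suc m"
      using permutations_of_setD[OF xs] by auto
    then have "card {j \<in> {0..m}. descents (insert_at j (Suc m) xs) = k}
      = (if k = descents xs then card {j \<in> {0..m}. descent_gap xs j} else 0)
        + (if k = Suc (descents xs) then card {0..m} - card {j \<in> {0..m}. descent_gap xs j} else 0)"
      by (intro card_filter_if_Suc) (auto simp: descents_insert_at_max len)
    then show ?thesis
      using card_descent_gaps[of xs] by (auto simp: len)
  qed
  have "eulerian (Suc m) k = card {ys \<in> ?S (Suc m). descents ys = k}"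
    by (rule eulerian_eq_card_descents)
  also have "\<dots> = card {p \<in> ?S m \<times> {0..m}. descents (case p of (xs, j) \<Rightarrow> insert_at j (Suc m) xs) = k}"
    by (rule card_filter_bij[OF bij_betw_insert_at_max])
  also have "\<dots> = card (SIGMA xs : ?S m. {j \<in> {0..m}. descents (insert_at j (Suc m) xs) = k})"
    by (rule arg_cong[where f = card]) auto
  also have "\<dots> = (\<Sum>xs \<in> ?S m. card {j \<in> {0..m}. descents (insert_at j (Suc m) xs) = k})"
    by (rule card_SigmaI) auto
  also have "\<dots> = (\<Sum>xs \<in> ?S m.
      (if descents xs = k then Suc k else 0) + (if Suc (descents xs) = k then Suc m - k else 0))"
    by (rule sum.cong[OF refl gaps])
  also have "\<dots> = Suc k * card {xs \<in> ?S m. descents xs = k}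
      + (Suc m - k) * card {xs \<in> ?S m. Suc (descents xs) = k}"
    by (simp add: sum.distrib sum.inter_filter[symmetric])
  finally show ?thesis
    by (cases k) (simp_all add: eulerian_eq_card_descents)
qed

section \<open>Leaves of the random recursive hypergraph\<close>

text \<open>Edge \<open>H ! i\<close> is the edge created together with vertex \<open>Suc i\<close>.\<close>

definition rrh_shaped :: "nat \<Rightarrow> nat set list \<Rightarrow> bool" where
  "rrh_shaped N H \<longleftrightarrow> length H = N \<and> (\<forall>i < N. Suc i \<in> H ! i \<and> H ! i \<subseteq> {1..Suc i})"

lemma rrh_shapedD:
  assumes "rrh_shaped N H" and "i < N"
  shows "Suc i \<in> H ! i" and "H ! i \<subseteq> {1..Suc i}" and "i < length H"
  using assms by (simp_all add: rrh_shaped_def)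

lemma rrh_shaped_set_pmf_rrh: "H \<in> set_pmf (rrh N) \<Longrightarrow> rrh_shaped N H"
proof (induction N arbitrary: H rule: rrh.induct)
  case 1
  then show ?case by (simp add: rrh_shaped_def)
next
  case 2
  then show ?case by (simp add: rrh_shaped_def)
next
  case (3 m)
  then obtain H0 where H0: "H0 \<in> set_pmf (rrh (Suc m))"
    and H: "H \<in> set_pmf (map_pmf (\<lambda>i. H0 @ [insert (Suc (Suc m)) (H0 ! i)]) (pmf_of_set {0..<length H0}))"
    by auto
  have shaped: "rrh_shaped (Suc m) H0"
    using "3.IH"[OF H0] .
  then have len: "length H0 = Suc m"
    by (simp add: rrh_shaped_def)
  from H obtain i where i: "i < Suc m" and H_eq: "H = H0 @ [insert (Suc (Suc m)) (H0 ! i)]"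
    by (auto simp: len)
  have "H0 ! i \<subseteq> {1..Suc (Suc m)}"
    using shaped i by (force simp: rrh_shaped_def)
  then show ?case
    using shaped len by (auto simp: rrh_shaped_def H_eq nth_append less_Suc_eq)
qed

lemma hdeg_snoc: "hdeg (H @ [e]) v = (if v \<in> e then Suc (hdeg H v) else hdeg H v)"
proof -
  have "{i. i < length (H @ [e]) \<and> v \<in> (H @ [e]) ! i}
      = {i. i < length H \<and> v \<in> H ! i} \<union> (if v \<in> e then {length H} else {})"
    by (auto simp: nth_append less_Suc_eq)
  then show ?thesis
    by (simp add: hdeg_def)
qed

lemma hdeg_pos:
  assumes "rrh_shaped N H" and "v \<in> {1..N}"
  shows "0 < hdeg H v"
proof -
  have "v - 1 < N" "Suc (v - 1) = v"
    using assms(2) by auto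
  then have "v - 1 \<in> {i. i < length H \<and> v \<in> H ! i}"
    using rrh_shapedD(1,3)[OF assms(1) \<open>v - 1 < N\<close>] by simp
  then show ?thesis
    unfolding hdeg_def by (auto simp: card_gt_0_iff)
qed

text \<open>A vertex lying on an edge other than its own was also in the edge it was created with.\<close>

lemma one_less_hdeg:
  assumes "rrh_shaped N H" and "i < N" and "v \<in> H ! i" and "v \<noteq> Suc i"
  shows "1 < hdeg H v"
proof -
  have v: "1 \<le> v" "v \<le> i"
    using rrh_shapedD(2)[OF assms(1,2)] assms(3,4) by auto
  then have "v - 1 < N" "Suc (v - 1) = v"
    using assms(2) by auto
  then have "{v - 1, i} \<subseteq> {j. j < length H \<and> v \<in> H ! j}"
    using rrh_shapedD(1,3)[OF assms(1) \<open>v - 1 < N\<close>] rrh_shapedD(3)[OF assms(1,2)] assms(3)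
    by auto
  moreover have "card {v - 1, i} = 2"
    using v by auto
  ultimately have "2 \<le> hdeg H v"
    unfolding hdeg_def by (metis card_mono finite_Collect_conjI finite_Collect_less_nat)
  then show ?thesis
    by simp
qed

lemma hdeg_eq_0:
  assumes "rrh_shaped N H" and "N < v"
  shows "hdeg H v = 0"
proof -
  have "{i. i < length H \<and> v \<in> H ! i} = {}"
    using assms by (fastforce simp: rrh_shaped_def)
  then show ?thesis
    by (simp add: hdeg_def)
qed

lemma card_hdeg_Suc_eq_numdeg:
  "card {i \<in> {0..<N}. hdeg H (Suc i) = k} = numdeg N k H"
proof -
  have "{v \<in> {1..N}. hdeg H v = k} = Suc ` {i \<in> {0..<N}. hdeg H (Suc i) = k}"
    by (auto simp: image_iff Suc_le_eq gr0_conv_Suc)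
  then show ?thesis
    by (simp add: numdeg_def card_image)
qed

lemma numdeg_1_snoc_insert:
  assumes shaped: "rrh_shaped N H" and i: "i < N"
  shows "numdeg (Suc N) 1 (H @ [insert (Suc N) (H ! i)])
       = (if hdeg H (Suc i) = 1 then numdeg N 1 H else Suc (numdeg N 1 H))"
proof -
  let ?H' = "H @ [insert (Suc N) (H ! i)]"
  let ?A = "{v \<in> {1..N}. hdeg H v = 1}"
  have own: "Suc i \<in> H ! i"
    by (rule rrh_shapedD(1)[OF shaped i])
  have old: "hdeg ?H' v = 1 \<longleftrightarrow> hdeg H v = 1 \<and> v \<noteq> Suc i" if v: "v \<in> {1..N}" for v
  proof (cases "v \<in> H ! i")
    case True
    have "hdeg H v = 1 \<longrightarrow> v = Suc i"
      using one_less_hdeg[OF shaped i True] by fastforce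
    then show ?thesis
      using True hdeg_pos[OF shaped v] by (auto simp: hdeg_snoc)
  next
    case False
    then show ?thesis
      using own v by (auto simp: hdeg_snoc)
  qed
  have new: "hdeg ?H' (Suc N) = 1"
    using hdeg_eq_0[OF shaped] by (simp add: hdeg_snoc)
  have "{v \<in> {1..Suc N}. hdeg ?H' v = 1} = insert (Suc N) (?A - {Suc i})"
    using old new by (auto simp: atLeastAtMostSuc_conv)
  moreover have "card (insert (Suc N) (?A - {Suc i}))
      = (if Suc i \<in> ?A then card ?A else Suc (card ?A))"
  proof -
    have "Suc i \<in> ?A \<Longrightarrow> 0 < card ?A"
      by (auto simp: card_gt_0_iff)
    then show ?thesis
      by (simp add: card_Diff_singleton_if)
  qed
  moreover have "Suc i \<in> ?A \<longleftrightarrow> hdeg H (Suc i) = 1"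
    using i by simp
  ultimately show ?thesis
    unfolding numdeg_def by simp
qed

lemma prob_eq_pmf_map_pmf: "measure_pmf.prob p {x. f x = y} = pmf (map_pmf f p) y"
  by (simp add: pmf_map vimage_def)

lemma prob_numdeg_1_rrh_Suc_Suc:
  "measure_pmf.prob (rrh (Suc (Suc m))) {H. numdeg (Suc (Suc m)) 1 H = n}
   = real n / real (Suc m) * measure_pmf.prob (rrh (Suc m)) {H. numdeg (Suc m) 1 H = n}
     + real (Suc (Suc m) - n) / real (Suc m)
       * measure_pmf.prob (rrh (Suc m)) {H. Suc (numdeg (Suc m) 1 H) = n}"
proof -
  let ?L = "numdeg (Suc m) 1"
  let ?attach = "\<lambda>H i. H @ [insert (Suc (Suc m)) (H ! i)]"
  define a b where "a = real n / real (Suc m)" and "b = real (Suc (Suc m) - n) / real (Suc m)"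
  have attach: "measure_pmf.prob (pmf_of_set {0..<Suc m}) {i. numdeg (Suc (Suc m)) 1 (?attach H i) = n}
      = a * indicator {H. ?L H = n} H + b * indicator {H. Suc (?L H) = n} H"
    if shaped: "rrh_shaped (Suc m) H" for H
  proof -
    have "card {i \<in> {0..<Suc m}. numdeg (Suc (Suc m)) 1 (?attach H i) = n}
        = (if n = ?L H then card {i \<in> {0..<Suc m}. hdeg H (Suc i) = 1} else 0)
          + (if n = Suc (?L H)
             then card {0..<Suc m} - card {i \<in> {0..<Suc m}. hdeg H (Suc i) = 1} else 0)"
      using numdeg_1_snoc_insert[OF shaped] by (intro card_filter_if_Suc) auto
    also have "\<dots> = (if ?L H = n then n else 0) + (if Suc (?L H) = n then Suc (Suc m) - n else 0)"
      using card_hdeg_Suc_eq_numdeg[of "Suc m" H 1] by auto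
    finally show ?thesis
      by (simp add: measure_pmf_of_set Int_def a_def b_def indicator_def add_divide_distrib)
  qed
  have "measure_pmf.prob (rrh (Suc (Suc m))) {H. numdeg (Suc (Suc m)) 1 H = n}
      = (\<integral>H. measure_pmf.prob (map_pmf (?attach H) (pmf_of_set {0..<length H}))
               {H'. numdeg (Suc (Suc m)) 1 H' = n} \<partial>rrh (Suc m))"
    by (simp add: prob_eq_pmf_map_pmf map_bind_pmf pmf_bind del: measure_map_pmf)
  also have "\<dots> = (\<integral>H. a * indicator {H. ?L H = n} H + b * indicator {H. Suc (?L H) = n} H \<partial>rrh (Suc m))"
  proof (intro integral_cong_AE AE_pmfI)
    fix H
    assume "H \<in> set_pmf (rrh (Suc m))"
    then have shaped: "rrh_shaped (Suc m) H"
      by (rule rrh_shaped_set_pmf_rrh)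
    then have "length H = Suc m"
      by (simp add: rrh_shaped_def)
    then show "measure_pmf.prob (map_pmf (?attach H) (pmf_of_set {0..<length H}))
               {H'. numdeg (Suc (Suc m)) 1 H' = n}
        = a * indicator {H. ?L H = n} H + b * indicator {H. Suc (?L H) = n} H"
      using attach[OF shaped] by (simp add: vimage_def)
  qed simp_all
  also have "\<dots> = a * measure_pmf.prob (rrh (Suc m)) {H. ?L H = n}
      + b * measure_pmf.prob (rrh (Suc m)) {H. Suc (?L H) = n}"
    by (simp add: measure_pmf.emeasure_eq_measure)
  finally show ?thesis
    by (simp add: a_def b_def)
qed

lemma prob_numdeg_1_rrh:
  "measure_pmf.prob (rrh (Suc m)) {H. numdeg (Suc m) 1 H = n}
   = (if n = 0 then 0 else real (eulerian m (n - 1)) / fact m)"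
proof (induction m arbitrary: n)
  case 0
  have "{i. i < length [{1::nat}] \<and> 1 \<in> [{1::nat}] ! i} = {0}"
    by auto
  then have "hdeg [{1}] 1 = 1"
    by (simp add: hdeg_def)
  then have "{v \<in> {1..1}. hdeg [{1}] v = 1} = {1::nat}"
    by auto
  then have "numdeg 1 1 [{1}] = 1"
    by (simp only: numdeg_def) simp
  then show ?case
    by (simp add: eulerian_0)
next
  case (Suc m)
  show ?case
  proof (cases n)
    case 0
    then show ?thesis
      unfolding prob_numdeg_1_rrh_Suc_Suc Suc.IH by simp
  next
    case (Suc k)
    have "measure_pmf.prob (rrh (Suc (Suc m))) {H. numdeg (Suc (Suc m)) 1 H = n}
        = real (Suc k) / real (Suc m) * measure_pmf.prob (rrh (Suc m)) {H. numdeg (Suc m) 1 H = Suc k}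
          + real (Suc m - k) / real (Suc m) * measure_pmf.prob (rrh (Suc m)) {H. numdeg (Suc m) 1 H = k}"
      unfolding prob_numdeg_1_rrh_Suc_Suc by (simp add: Suc)
    also have "\<dots> = real (Suc k) / real (Suc m) * (real (eulerian m k) / fact m)
          + real (Suc m - k) / real (Suc m) * (if k = 0 then 0 else real (eulerian m (k - 1)) / fact m)"
      unfolding Suc.IH by simp
    also have "\<dots> = real (eulerian (Suc m) k) / fact (Suc m)"
      by (cases "k = 0")
        (simp_all add: eulerian_Suc field_simps, simp add: add_divide_distrib[symmetric] add.assoc)
    finally show ?thesis
      using Suc by simp
  qed
qed

theorem mainTheorem1:
  fixes N n :: nat
  assumes "N \<ge> 1" and "n \<ge> 1"
  shows "measure_pmf.prob (rrh N) {H. numdeg N 1 H = n}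
         = real (eulerian (N - 1) (n - 1)) / fact (N - 1)"
proof -
  obtain m where "N = Suc m"
    using assms(1) by (cases N) auto
  then show ?thesis
    using prob_numdeg_1_rrh[of m n] assms(2) by simp
qed

end
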